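(* Let $T$ be a tree such that the longest $2$-path in $T$ has length $d\ge1$, and let $k$ be a positive integer. Then there exists $L>0$ (depending only on $k$ and $d$) such that the following holds: if $T$ contains a $\mathrm{C}$-gadget of order $d$ and length $L$, then there exists $1\le d'\le d$ such that $T$ contains a closed strong $\mathrm{C}$-gadget of order $d'$ with at least $k$ junctions.
   Context: In a tree $T$: a $2$-path of length $a$ is a path $x_0,\dots,x_a$ with $\deg(x_0)\ne2$, $\deg(x_1)=\dots=\deg(x_{a-1})=2$, $\deg(x_a)\ne 2$. A source is a vertex of degree $>2$. A ray of length $a$ is a $2$-path $x_0,\dots,x_a$ with $\deg(x_0)>2$, $\deg(x_a)=1$; $x_0$ is its source. For a source $s$, let $\deg_{\mathcal{L}}^a(s)$ be the number of rays of length $a$ with source $s$ and $\deg_{\overline{\mathcal{L}}}(s)=\deg(s)-\sum_a\deg_{\mathcal{L}}^a(s)$; $s$ is a fork if $\deg_{\overline{\mathcal{L}}}(s)=1$ and there are positive integers $a,b$ with either $a\ne b$ and $\deg^a_{\mathcal{L}}(s),\deg^b_{\mathcal{L}}(s)>0$, or $a=b$ and $\deg^a_{\mathcal{L}}(s)>1$. A $\mathrm{C}$-gadget of order $d$ and length $k$ is a path $x_0,\dots,x_k$ such that each inner vertex $x_i$ either has degree $2$ or is a source such that every neighbour of $x_i$ other than $x_{i-1},x_{i+1}$ is contained in a ray of length at most $d$ from $x_i$ to a leaf. A $\mathrm{C}$-gadget $x_0,\dots,x_L$ of order $d$ is a strong $\mathrm{C}$-gadget with $k$ junctions if there are integers $0=i_0<i_1<\dots<i_k<i_{k+1}=L$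 with $i_{j+1}-i_j>2d$ for all $j\in\{0,\dots,k\}$ and, for all $j\in\{1,\dots,k\}$, $x_{i_j}$ is the source of a ray of length $d$ containing neither $x_{i_j-1}$ nor $x_{i_j+1}$; $x_{i_1},\dots,x_{i_k}$ are the junctions. It is closed if neither $x_{i_1}$ nor $x_{i_k}$ is a fork. *)

theory Defs
  imports Main
begin

text \<open>Finite simple graphs given by a vertex set V and an edge relation E.
  Paths are lists of distinct vertices with consecutive vertices adjacent;
  a path x_0,...,x_a (list of length a+1) has length a.\<close>

definition is_path :: "'a set \<Rightarrow> ('a \<Rightarrow> 'a \<Rightarrow> bool) \<Rightarrow> 'a list \<Rightarrow> bool" where
  "is_path V E xs \<longleftrightarrow> xs \<noteq> [] \<and> set xs \<subseteq> V \<and> distinct xs \<and>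
     (\<forall>i. Suc i < length xs \<longrightarrow> E (xs ! i) (xs ! Suc i))"

definition is_tree :: "'a set \<Rightarrow> ('a \<Rightarrow> 'a \<Rightarrow> bool) \<Rightarrow> bool" where
  "is_tree V E \<longleftrightarrow> finite V \<and> V \<noteq> {} \<and>
     (\<forall>x y. E x y \<longrightarrow> x \<in> V \<and> y \<in> V \<and> x \<noteq> y \<and> E y x) \<and>
     (\<forall>u\<in>V. \<forall>v\<in>V. \<exists>xs. is_path V E xs \<and> hd xs = u \<and> last xs = v) \<and>
     \<not> (\<exists>xs. is_path V E xs \<and> length xs \<ge> 3 \<and> E (last xs) (hd xs))"

definition deg :: "'a set \<Rightarrow> ('a \<Rightarrow> 'a \<Rightarrow> bool) \<Rightarrow> 'a \<Rightarrow> nat" where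
  "deg V E v = card {u \<in> V. E v u}"

definition two_path :: "'a set \<Rightarrow> ('a \<Rightarrow> 'a \<Rightarrow> bool) \<Rightarrow> 'a list \<Rightarrow> bool" where
  "two_path V E xs \<longleftrightarrow> is_path V E xs \<and> length xs \<ge> 2 \<and>
     deg V E (hd xs) \<noteq> 2 \<and> deg V E (last xs) \<noteq> 2 \<and>
     (\<forall>i. 0 < i \<and> Suc i < length xs \<longrightarrow> deg V E (xs ! i) = 2)"

definition is_source :: "'a set \<Rightarrow> ('a \<Rightarrow> 'a \<Rightarrow> bool) \<Rightarrow> 'a \<Rightarrow> bool" where
  "is_source V E s \<longleftrightarrow> s \<in> V \<and> deg V E s > 2"

definition is_ray :: "'a set \<Rightarrow> ('a \<Rightarrow> 'a \<Rightarrow> bool) \<Rightarrow> 'a list \<Rightarrow> bool" where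
  "is_ray V E xs \<longleftrightarrow> two_path V E xs \<and> deg V E (hd xs) > 2 \<and> deg V E (last xs) = 1"

definition ray_deg :: "'a set \<Rightarrow> ('a \<Rightarrow> 'a \<Rightarrow> bool) \<Rightarrow> nat \<Rightarrow> 'a \<Rightarrow> nat" where
  "ray_deg V E a s = card {xs. is_ray V E xs \<and> hd xs = s \<and> length xs = Suc a}"

text \<open>deg_{L-bar}(s) = deg(s) - sum over a of deg_L^a(s); rays have length
  between 1 and card V, so the sum over a ranges over 1..card V.\<close>
definition nonray_deg :: "'a set \<Rightarrow> ('a \<Rightarrow> 'a \<Rightarrow> bool) \<Rightarrow> 'a \<Rightarrow> nat" where
  "nonray_deg V E s = deg V E s - (\<Sum>a\<in>{1..card V}. ray_deg V E a s)"

definition is_fork :: "'a set \<Rightarrow> ('a \<Rightarrow> 'a \<Rightarrow> bool) \<Rightarrow> 'a \<Rightarrow> bool" where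
  "is_fork V E s \<longleftrightarrow> is_source V E s \<and> nonray_deg V E s = 1 \<and>
     (\<exists>a b. 0 < a \<and> 0 < b \<and>
        ((a \<noteq> b \<and> ray_deg V E a s > 0 \<and> ray_deg V E b s > 0) \<or>
         (a = b \<and> ray_deg V E a s > 1)))"

definition c_gadget :: "'a set \<Rightarrow> ('a \<Rightarrow> 'a \<Rightarrow> bool) \<Rightarrow> nat \<Rightarrow> nat \<Rightarrow> 'a list \<Rightarrow> bool" where
  "c_gadget V E d k xs \<longleftrightarrow> is_path V E xs \<and> length xs = Suc k \<and>
     (\<forall>i. 0 < i \<and> i < k \<longrightarrow>
        deg V E (xs ! i) = 2 \<or>
        (is_source V E (xs ! i) \<and>
         (\<forall>y. E (xs ! i) y \<and> y \<noteq> xs ! (i - 1) \<and> y \<noteq> xs ! Suc i \<longrightarrow>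
            (\<exists>r. is_ray V E r \<and> hd r = xs ! i \<and> r ! 1 = y \<and> length r \<le> Suc d))))"

definition closed_strong_c_gadget ::
  "'a set \<Rightarrow> ('a \<Rightarrow> 'a \<Rightarrow> bool) \<Rightarrow> nat \<Rightarrow> nat \<Rightarrow> 'a list \<Rightarrow> bool" where
  "closed_strong_c_gadget V E d k xs \<longleftrightarrow>
     (\<exists>L. c_gadget V E d L xs \<and>
      (\<exists>I :: nat \<Rightarrow> nat. I 0 = 0 \<and> I (Suc k) = L \<and>
         (\<forall>j\<le>k. I j < I (Suc j) \<and> I (Suc j) - I j > 2 * d) \<and>
         (\<forall>j\<in>{1..k}. \<exists>r. is_ray V E r \<and> hd r = xs ! (I j) \<and> length r = Suc d \<and>
              xs ! (I j - 1) \<notin> set r \<and> xs ! Suc (I j) \<notin> set r) \<and>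
         \<not> is_fork V E (xs ! (I 1)) \<and> \<not> is_fork V E (xs ! (I k))))"

end

theory Submission
  imports Defs
begin

text \<open>Induction on the order e of the gadget, for trees whose 2-paths have length at most d.
  The inner vertices of a gadget of order 0 have degree 2, so it lies inside a 2-path and
  has length at most d. A gadget of order e+1 is cut into k blocks with a central window
  each. If some window is a gadget of order e, induction applies. Otherwise every window
  contains a vertex violating the condition of order e; since it satisfies that of order
  e+1, it is the source of a ray of length exactly e+1 leaving the gadget, i.e. a junction.
  No junction is a fork: a ray leaving it along the gadget would, by the degree-2 interior
  of rays, run along the gadget and end inside it, at a vertex of degree at least 2; the
  margins of length 2d+1 around the windows keep such rays of length at most d inside the
  gadget and separate consecutive junctions by more than 2(e+1).\<close>

section \<open>Paths in trees\<close>

lemma tree_edgeD: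
  assumes "is_tree V E" "E x y"
  shows "x \<in> V" "y \<in> V" "x \<noteq> y" "E y x"
  using assms unfolding is_tree_def by blast+

lemma is_path_take: "is_path V E xs \<Longrightarrow> 0 < n \<Longrightarrow> is_path V E (take n xs)"
  unfolding is_path_def by (auto dest: in_set_takeD)

lemma is_path_drop: "is_path V E xs \<Longrightarrow> n < length xs \<Longrightarrow> is_path V E (drop n xs)"
  unfolding is_path_def by (auto dest: in_set_dropD)

lemma is_path_edge: "is_path V E xs \<Longrightarrow> Suc i < length xs \<Longrightarrow> E (xs ! i) (xs ! Suc i)"
  unfolding is_path_def by blast

lemma is_path_nth_neq:
  "is_path V E xs \<Longrightarrow> i < length xs \<Longrightarrow> j < length xs \<Longrightarrow> i \<noteq> j \<Longrightarrow> xs ! i \<noteq> xs ! j"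
  unfolding is_path_def by (simp add: nth_eq_iff_index_eq)

lemma is_path_length_le_card: "is_path V E xs \<Longrightarrow> finite V \<Longrightarrow> length xs \<le> card V"
  unfolding is_path_def by (metis card_mono distinct_card)

lemma is_path_rev:
  assumes t: "is_tree V E" and p: "is_path V E xs"
  shows "is_path V E (rev xs)"
  unfolding is_path_def
proof (intro conjI allI impI)
  fix i assume i: "Suc i < length (rev xs)"
  have "Suc (length xs - Suc (Suc i)) = length xs - Suc i" using i by simp
  then have "E (xs ! (length xs - Suc (Suc i))) (xs ! (length xs - Suc i))"
    using is_path_edge[OF p, of "length xs - Suc (Suc i)"] i by simp
  then show "E (rev xs ! i) (rev xs ! Suc i)" using i tree_edgeD(4)[OF t] by (simp add: rev_nth)
qed (use p in \<open>auto simp: is_path_def\<close>)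

lemma tree_path_no_chord:
  assumes t: "is_tree V E" and p: "is_path V E P" and j: "2 \<le> j" "j < length P"
  shows "\<not> E (P ! j) (P ! 0)"
proof
  assume e: "E (P ! j) (P ! 0)"
  have "is_path V E (take (Suc j) P)" using is_path_take[OF p] by simp
  moreover have "length (take (Suc j) P) \<ge> 3" using j by simp
  moreover have "last (take (Suc j) P) = P ! j" using j by (subst last_conv_nth) auto
  moreover have "hd (take (Suc j) P) = P ! 0" using j by (cases P) auto
  ultimately show False using t e unfolding is_tree_def by metis
qed

definition neighbours :: "'a set \<Rightarrow> ('a \<Rightarrow> 'a \<Rightarrow> bool) \<Rightarrow> 'a \<Rightarrow> 'a set" where
  "neighbours V E v = {u \<in> V. E v u}"

lemma deg_eq_card_neighbours: "deg V E v = card (neighbours V E v)"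
  unfolding deg_def neighbours_def by simp

lemma finite_neighbours: "is_tree V E \<Longrightarrow> finite (neighbours V E v)"
  unfolding neighbours_def is_tree_def by simp

lemma neighbours_iff: "is_tree V E \<Longrightarrow> u \<in> neighbours V E v \<longleftrightarrow> E v u"
  unfolding neighbours_def using tree_edgeD by fast

lemma deg2_neighbour_cases:
  assumes t: "is_tree V E" and d: "deg V E v = 2" and "E v a" "E v b" "E v c" "a \<noteq> b"
  shows "c = a \<or> c = b"
proof -
  have s: "{a, b} \<subseteq> neighbours V E v" using assms neighbours_iff[OF t] by auto
  have "card {a, b} = card (neighbours V E v)" using d assms by (simp add: deg_eq_card_neighbours)
  then have "{a, b} = neighbours V E v" using card_subset_eq[OF finite_neighbours[OF t] s] by simp
  then show ?thesis using assms neighbours_iff[OF t] by auto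
qed

lemma deg_path_interior_ge_2:
  assumes t: "is_tree V E" and p: "is_path V E P" and i: "0 < i" "Suc i < length P"
  shows "deg V E (P ! i) \<ge> 2"
proof -
  have "E (P ! i) (P ! (i - 1))" using is_path_edge[OF p, of "i - 1"] i tree_edgeD(4)[OF t] by simp
  moreover have "E (P ! i) (P ! Suc i)" using is_path_edge[OF p, of i] i by simp
  ultimately have s: "{P ! (i - 1), P ! Suc i} \<subseteq> neighbours V E (P ! i)"
    using neighbours_iff[OF t] by auto
  have "P ! (i - 1) \<noteq> P ! Suc i" using is_path_nth_neq[OF p] i by simp
  then show ?thesis
    using card_mono[OF finite_neighbours[OF t] s] by (simp add: deg_eq_card_neighbours)
qed

lemma deg2_paths_agree:
  assumes t: "is_tree V E" and P: "is_path V E P" and Q: "is_path V E Q"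
    and start: "P ! 0 = Q ! 0" "P ! 1 = Q ! 1"
    and deg2: "\<And>j. 0 < j \<Longrightarrow> Suc j < length P \<Longrightarrow> deg V E (P ! j) = 2"
  shows "i < length P \<Longrightarrow> i < length Q \<Longrightarrow> P ! i = Q ! i"
proof (induction i rule: less_induct)
  case (less i)
  show ?case
  proof (cases "i < 2")
    case True
    then show ?thesis using start by (auto simp: less_2_cases_iff)
  next
    case False
    define j where "j = i - 1"
    have ij: "i = Suc j" "0 < j" using False unfolding j_def by auto
    have same: "P ! j = Q ! j" "P ! (j - 1) = Q ! (j - 1)" using less ij by auto
    have "deg V E (P ! j) = 2" using deg2 ij less.prems by simp
    moreover have "E (P ! j) (P ! (j - 1))"
      using is_path_edge[OF P, of "j - 1"] ij less.prems tree_edgeD(4)[OF t] by simp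
    moreover have "E (P ! j) (P ! i)" "E (P ! j) (Q ! i)"
      using is_path_edge[OF P, of j] is_path_edge[OF Q, of j] ij less.prems same by auto
    moreover have "P ! (j - 1) \<noteq> P ! i" "Q ! i \<noteq> Q ! (j - 1)"
      using is_path_nth_neq[OF P] is_path_nth_neq[OF Q] ij less.prems by auto
    ultimately show ?thesis using deg2_neighbour_cases[OF t] same by metis
  qed
qed

section \<open>Rays\<close>

lemma is_rayD:
  assumes "is_ray V E r"
  shows "is_path V E r" "length r \<ge> 2" "r ! 0 = hd r" "deg V E (hd r) > 2"
    "deg V E (r ! (length r - 1)) = 1"
    "\<And>j. 0 < j \<Longrightarrow> Suc j < length r \<Longrightarrow> deg V E (r ! j) = 2"
  using assms unfolding is_ray_def two_path_def is_path_def
  by (auto simp: hd_conv_nth last_conv_nth)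

lemma ray_end_not_on_longer_ray:
  assumes r: "is_ray V E r" and r': "is_ray V E r'" and l: "length r < length r'"
  shows "r ! (length r - 1) \<noteq> r' ! (length r - 1)"
proof -
  have "deg V E (r' ! (length r - 1)) = 2" using is_rayD(2,6)[OF r'] is_rayD(2)[OF r] l by simp
  then show ?thesis using is_rayD(5)[OF r] by auto
qed

lemma rays_eq_if_same_first_edge:
  assumes t: "is_tree V E" and r1: "is_ray V E r1" and r2: "is_ray V E r2"
    and "hd r1 = hd r2" and "r1 ! 1 = r2 ! 1"
  shows "r1 = r2"
proof -
  have agree: "r1 ! i = r2 ! i" if "i < length r1" "i < length r2" for i
    using deg2_paths_agree[OF t is_rayD(1)[OF r1] is_rayD(1)[OF r2]] that assms is_rayD(3,6)[OF r1]
      is_rayD(3)[OF r2] by metis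
  have "length r1 = length r2"
  proof (rule ccontr)
    assume "length r1 \<noteq> length r2"
    then consider "length r1 < length r2" | "length r2 < length r1" by linarith
    then show False
      using ray_end_not_on_longer_ray[OF r1 r2] ray_end_not_on_longer_ray[OF r2 r1] agree
        is_rayD(2)[OF r1] is_rayD(2)[OF r2] by cases auto
  qed
  then show ?thesis using agree by (simp add: nth_equalityI)
qed

text \<open>Having interior degree 2, the ray would follow the path and end at an interior
  path vertex, which has degree at least 2.\<close>

lemma ray_not_along_path:
  assumes t: "is_tree V E" and p: "is_path V E P" and r: "is_ray V E r"
    and "hd r = P ! b" "r ! 1 = P ! Suc b" and b: "b + length r < length P"
  shows False
proof -
  have pd: "is_path V E (drop b P)" using is_path_drop[OF p] b by simp
  have "r ! (length r - 1) = drop b P ! (length r - 1)"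
    using deg2_paths_agree[OF t is_rayD(1)[OF r] pd] assms is_rayD(2,3,6)[OF r] by simp
  moreover have "deg V E (P ! (b + (length r - 1))) \<ge> 2"
    using deg_path_interior_ge_2[OF t p] is_rayD(2)[OF r] b by simp
  ultimately show False using is_rayD(5)[OF r] b by simp
qed

definition deg2_interior :: "'a set \<Rightarrow> ('a \<Rightarrow> 'a \<Rightarrow> bool) \<Rightarrow> 'a list \<Rightarrow> bool" where
  "deg2_interior V E P \<longleftrightarrow> (\<forall>i. 0 < i \<and> Suc i < length P \<longrightarrow> deg V E (P ! i) = 2)"

lemma deg2_interior_rev: "deg2_interior V E P \<Longrightarrow> deg2_interior V E (rev P)"
  unfolding deg2_interior_def
proof (intro allI impI)
  fix i assume a: "\<forall>i. 0 < i \<and> Suc i < length P \<longrightarrow> deg V E (P ! i) = 2"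
    and i: "0 < i \<and> Suc i < length (rev P)"
  have "0 < length P - Suc i" "Suc (length P - Suc i) < length P" using i by auto
  then have "deg V E (P ! (length P - Suc i)) = 2" using a by blast
  then show "deg V E (rev P ! i) = 2" using i by (simp add: rev_nth)
qed

lemma deg2_interior_path_extend:
  assumes t: "is_tree V E" and p: "is_path V E P" and l: "length P \<ge> 2"
    and i2: "deg2_interior V E P" and dh: "deg V E (P ! 0) = 2"
  obtains u where "is_path V E (u # P)" "deg2_interior V E (u # P)"
proof -
  have "P ! 1 \<in> neighbours V E (P ! 0)"
    using is_path_edge[OF p, of 0] l neighbours_iff[OF t] by simp
  moreover have "card (neighbours V E (P ! 0)) = 2" using dh by (simp add: deg_eq_card_neighbours)
  ultimately obtain u where u: "u \<in> neighbours V E (P ! 0)" "u \<noteq> P ! 1"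
    by (auto simp: card_2_iff)
  have eu: "E (P ! 0) u" "u \<in> V" using u neighbours_iff[OF t] tree_edgeD[OF t] by auto
  have "u \<notin> set P"
  proof
    assume "u \<in> set P"
    then obtain j where j: "j < length P" "P ! j = u" by (auto simp: in_set_conv_nth)
    have "j \<noteq> 0" using j tree_edgeD(3)[OF t eu(1)] by (cases j) auto
    moreover have "j \<noteq> 1" using j u by auto
    ultimately show False using tree_path_no_chord[OF t p, of j] j eu tree_edgeD(4)[OF t] by auto
  qed
  then have "is_path V E (u # P)"
    using p eu tree_edgeD(4)[OF t] unfolding is_path_def by (auto simp: nth_Cons split: nat.split)
  moreover have "deg2_interior V E (u # P)"
    using i2 dh unfolding deg2_interior_def by (auto simp: nth_Cons split: nat.split) (metis gr0I)
  ultimately show ?thesis using that by blast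
qed

lemma exists_two_path_extending:
  assumes t: "is_tree V E" and p: "is_path V E P" and l: "length P \<ge> 2"
    and i2: "deg2_interior V E P"
  obtains Q where "two_path V E Q" "length Q \<ge> length P"
proof -
  define S where "S = (\<lambda>n. \<exists>Q. is_path V E Q \<and> length Q \<ge> length P \<and> deg2_interior V E Q \<and> length Q = n)"
  have "S (length P)" using p i2 unfolding S_def by blast
  moreover have "\<forall>n. S n \<longrightarrow> n \<le> card V"
    unfolding S_def using is_path_length_le_card t unfolding is_tree_def by blast
  ultimately obtain n where n: "S n" "\<forall>m. S m \<longrightarrow> m \<le> n"
    using Nat.ex_has_greatest_nat[of S "length P" "card V"] by blast
  then obtain Q where q: "is_path V E Q" "length Q \<ge> length P" "deg2_interior V E Q" "length Q = n"
    unfolding S_def by blast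
  have lq: "length Q \<ge> 2" using q l by simp
  then have "Q \<noteq> []" by auto
  have maximal: False if "is_path V E (u # Q')" "deg2_interior V E (u # Q')" "length Q' = n" for u Q'
    using n(2) that q(2,4) unfolding S_def by fastforce
  have hd: "deg V E (Q ! 0) \<noteq> 2"
    using deg2_interior_path_extend[OF t q(1) lq q(3)] maximal q(4) by metis
  have "rev Q ! 0 = Q ! (length Q - 1)" using lq by (subst rev_nth) auto
  then have last: "deg V E (Q ! (length Q - 1)) \<noteq> 2"
    using deg2_interior_path_extend[OF t is_path_rev[OF t q(1)] _ deg2_interior_rev[OF q(3)]]
      maximal lq q(4) by (metis length_rev)
  have "two_path V E Q"
    using q lq hd last \<open>Q \<noteq> []\<close> unfolding two_path_def deg2_interior_def
    by (auto simp: hd_conv_nth last_conv_nth)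
  then show ?thesis using that q by blast
qed

section \<open>Forks\<close>

lemma sum_ray_deg_le_card:
  assumes t: "is_tree V E" and N: "finite N" "\<And>r. is_ray V E r \<Longrightarrow> hd r = s \<Longrightarrow> r ! 1 \<in> N"
  shows "(\<Sum>a\<in>{1..card V}. ray_deg V E a s) \<le> card N"
proof -
  define R where "R = (\<lambda>n. {xs. is_ray V E xs \<and> hd xs = s \<and> length xs = Suc n})"
  have fin: "finite (R n)" for n
  proof -
    have "R n \<subseteq> {xs. set xs \<subseteq> V \<and> length xs = Suc n}"
      unfolding R_def is_ray_def two_path_def is_path_def by auto
    then show ?thesis using finite_lists_length_eq t finite_subset unfolding is_tree_def by blast
  qed
  have "\<forall>i\<in>{1..card V}. \<forall>j\<in>{1..card V}. i \<noteq> j \<longrightarrow> R i \<inter> R j = {}"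
    unfolding R_def by auto
  then have "(\<Sum>a\<in>{1..card V}. ray_deg V E a s) = card (\<Union>(R ` {1..card V}))"
    using card_UN_disjoint[of "{1..card V}" R] fin unfolding R_def ray_deg_def by simp
  also have "\<dots> \<le> card N"
  proof (rule card_inj_on_le[OF _ _ N(1)])
    show "inj_on (\<lambda>r. r ! 1) (\<Union>(R ` {1..card V}))"
    proof (rule inj_onI)
      fix r r' assume "r \<in> \<Union>(R ` {1..card V})" "r' \<in> \<Union>(R ` {1..card V})" "r ! 1 = r' ! 1"
      then show "r = r'" using rays_eq_if_same_first_edge[OF t] unfolding R_def by auto
    qed
    show "(\<lambda>r. r ! 1) ` (\<Union>(R ` {1..card V})) \<subseteq> N"
      using N(2) unfolding R_def by auto
  qed
  finally show ?thesis .
qed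

lemma not_fork_if_two_non_ray_neighbours:
  assumes t: "is_tree V E" and "E s a" "E s c" "a \<noteq> c"
    and no_ray: "\<And>r. is_ray V E r \<Longrightarrow> hd r = s \<Longrightarrow> r ! 1 \<noteq> a \<and> r ! 1 \<noteq> c"
  shows "\<not> is_fork V E s"
proof -
  define N where "N = neighbours V E s - {a, c}"
  have "r ! 1 \<in> N" if r: "is_ray V E r" "hd r = s" for r
  proof -
    have "E s (r ! 1)" using is_path_edge[OF is_rayD(1)[OF r(1)], of 0] is_rayD(2,3)[OF r(1)] r(2)
      by simp
    then show ?thesis using no_ray[OF r] neighbours_iff[OF t] unfolding N_def by auto
  qed
  then have "(\<Sum>a\<in>{1..card V}. ray_deg V E a s) \<le> card N"
    using sum_ray_deg_le_card[OF t] finite_neighbours[OF t] unfolding N_def by blast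
  moreover have sub: "{a, c} \<subseteq> neighbours V E s" using assms neighbours_iff[OF t] by auto
  then have "card N = deg V E s - 2"
    using card_Diff_subset[OF _ sub] \<open>a \<noteq> c\<close> unfolding N_def deg_eq_card_neighbours by simp
  moreover have "deg V E s \<ge> 2"
    using card_mono[OF finite_neighbours[OF t] sub] \<open>a \<noteq> c\<close> by (simp add: deg_eq_card_neighbours)
  ultimately have "nonray_deg V E s \<ge> 2" unfolding nonray_deg_def by linarith
  then show ?thesis unfolding is_fork_def by simp
qed

lemma path_vertex_not_fork:
  assumes t: "is_tree V E" and bd: "\<forall>r. two_path V E r \<longrightarrow> length r \<le> Suc d"
    and p: "is_path V E P" and b: "Suc d \<le> b" "b + Suc d < length P"
  shows "\<not> is_fork V E (P ! b)"
proof (rule not_fork_if_two_non_ray_neighbours[OF t])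
  show "E (P ! b) (P ! (b - 1))" using is_path_edge[OF p, of "b - 1"] b tree_edgeD(4)[OF t] by simp
  show "E (P ! b) (P ! Suc b)" using is_path_edge[OF p, of b] b by simp
  show "P ! (b - 1) \<noteq> P ! Suc b" using is_path_nth_neq[OF p] b by simp
  fix r assume r: "is_ray V E r" "hd r = P ! b"
  have lr: "length r \<le> Suc d" using bd r(1) unfolding is_ray_def by blast
  show "r ! 1 \<noteq> P ! (b - 1) \<and> r ! 1 \<noteq> P ! Suc b"
  proof
    let ?b' = "length P - Suc b"
    have "rev P ! ?b' = P ! b" "rev P ! Suc ?b' = P ! (b - 1)"
      using b by (simp_all add: rev_nth Suc_diff_Suc)
    moreover have "?b' + length r < length (rev P)" using lr b by simp
    ultimately show "r ! 1 \<noteq> P ! (b - 1)"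
      using ray_not_along_path[OF t is_path_rev[OF t p] r(1)] r(2) by metis
    have "b + length r < length P" using lr b by simp
    then show "r ! 1 \<noteq> P ! Suc b" using ray_not_along_path[OF t p r(1) r(2)] by blast
  qed
qed

section \<open>C-gadgets\<close>

definition c_gadget_vertex ::
  "'a set \<Rightarrow> ('a \<Rightarrow> 'a \<Rightarrow> bool) \<Rightarrow> nat \<Rightarrow> 'a \<Rightarrow> 'a \<Rightarrow> 'a \<Rightarrow> bool" where
  "c_gadget_vertex V E d u v w \<longleftrightarrow> deg V E v = 2 \<or>
     (is_source V E v \<and>
      (\<forall>y. E v y \<and> y \<noteq> u \<and> y \<noteq> w \<longrightarrow>
         (\<exists>r. is_ray V E r \<and> hd r = v \<and> r ! 1 = y \<and> length r \<le> Suc d)))"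

lemma c_gadget_iff:
  "c_gadget V E d L xs \<longleftrightarrow> is_path V E xs \<and> length xs = Suc L \<and>
     (\<forall>i. 0 < i \<and> i < L \<longrightarrow> c_gadget_vertex V E d (xs ! (i - 1)) (xs ! i) (xs ! Suc i))"
  unfolding c_gadget_def c_gadget_vertex_def by simp

lemma c_gadget_window_iff:
  assumes p: "is_path V E xs" and l: "q + L < length xs"
  shows "c_gadget V E d L (take (Suc L) (drop q xs)) \<longleftrightarrow>
    (\<forall>i. q < i \<and> i < q + L \<longrightarrow> c_gadget_vertex V E d (xs ! (i - 1)) (xs ! i) (xs ! Suc i))"
    (is "_ \<longleftrightarrow> (\<forall>i. _ \<longrightarrow> ?good i)")
proof -
  let ?W = "take (Suc L) (drop q xs)"
  have "is_path V E ?W" using is_path_take[OF is_path_drop[OF p]] l by simp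
  moreover have "length ?W = Suc L" using l by simp
  moreover have "c_gadget_vertex V E d (?W ! (i - 1)) (?W ! i) (?W ! Suc i) \<longleftrightarrow> ?good (q + i)"
    if "0 < i" "i < L" for i
    using that l by (simp add: Suc_diff_le add_diff_assoc)
  ultimately have "c_gadget V E d L ?W \<longleftrightarrow> (\<forall>i. 0 < i \<and> i < L \<longrightarrow> ?good (q + i))"
    unfolding c_gadget_iff by auto
  also have "\<dots> \<longleftrightarrow> (\<forall>i. q < i \<and> i < q + L \<longrightarrow> ?good i)"
  proof safe
    fix i assume "\<forall>j. 0 < j \<and> j < L \<longrightarrow> ?good (q + j)" "q < i" "i < q + L"
    then show "?good i" by (auto dest: spec[of _ "i - q"])
  qed auto
  finally show ?thesis .
qed

lemma c_gadget_vertex_order_0: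
  assumes t: "is_tree V E" and g: "c_gadget_vertex V E 0 u v w"
  shows "deg V E v = 2"
proof (rule ccontr)
  assume "deg V E v \<noteq> 2"
  then have src: "is_source V E v" and
    short: "\<And>y. E v y \<Longrightarrow> y \<noteq> u \<Longrightarrow> y \<noteq> w \<Longrightarrow> \<exists>r. is_ray V E r \<and> length r \<le> 1"
    using g unfolding c_gadget_vertex_def by auto
  have "\<not> neighbours V E v \<subseteq> {u, w}"
  proof
    assume "neighbours V E v \<subseteq> {u, w}"
    then have "card (neighbours V E v) \<le> card {u, w}" by (simp add: card_mono)
    also have "\<dots> \<le> 2" by (cases "u = w") auto
    finally have "card (neighbours V E v) \<le> 2" .
    then show False using src unfolding is_source_def deg_eq_card_neighbours by simp
  qed
  then obtain y where "E v y" "y \<noteq> u" "y \<noteq> w" using neighbours_iff[OF t] by auto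
  then show False using short is_rayD(2) by fastforce
qed

lemma c_gadget_order_0_length_le:
  assumes t: "is_tree V E" and bd: "\<forall>r. two_path V E r \<longrightarrow> length r \<le> Suc d"
    and g: "c_gadget V E 0 L xs"
  shows "L \<le> d"
proof (cases "L = 0")
  case False
  have p: "is_path V E xs" "length xs = Suc L" using g unfolding c_gadget_iff by auto
  have "deg2_interior V E xs"
    using g c_gadget_vertex_order_0[OF t] p(2) unfolding c_gadget_iff deg2_interior_def by auto
  moreover have "length xs \<ge> 2" using p(2) False by simp
  ultimately obtain Q where "two_path V E Q" "length Q \<ge> Suc L"
    using exists_two_path_extending[OF t p(1)] p(2) by metis
  then show ?thesis using bd by fastforce
qed simp

lemma junction_ray:
  assumes t: "is_tree V E" and "E v u" "E v w"
    and g1: "c_gadget_vertex V E (Suc e) u v w" and g0: "\<not> c_gadget_vertex V E e u v w"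
  shows "\<exists>r. is_ray V E r \<and> hd r = v \<and> length r = Suc (Suc e) \<and> u \<notin> set r \<and> w \<notin> set r"
proof -
  obtain y where y: "E v y" "y \<noteq> u" "y \<noteq> w"
    and short: "\<not> (\<exists>r. is_ray V E r \<and> hd r = v \<and> r ! 1 = y \<and> length r \<le> Suc e)"
    using g0 g1 unfolding c_gadget_vertex_def by blast
  obtain r where r: "is_ray V E r" "hd r = v" "r ! 1 = y" "length r \<le> Suc (Suc e)"
    using g0 g1 y unfolding c_gadget_vertex_def by blast
  have off_ray: "z \<notin> set r" if "E v z" "z \<noteq> y" for z
  proof
    assume "z \<in> set r"
    then obtain j where j: "j < length r" "r ! j = z" by (auto simp: in_set_conv_nth)
    have "j \<noteq> 0" using j tree_edgeD(3)[OF t that(1)] r(2) is_rayD(3)[OF r(1)] by (cases j) auto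
    moreover have "j \<noteq> 1" using j that r by auto
    ultimately show False
      using tree_path_no_chord[OF t is_rayD(1)[OF r(1)] _ j(1)] j that r(2) is_rayD(3)[OF r(1)]
        tree_edgeD(4)[OF t] by auto
  qed
  show ?thesis
    using r short off_ray assms(2,3) y by (intro exI[of _ r]) (auto simp: le_Suc_eq)
qed

lemma c_gadget_junction:
  assumes t: "is_tree V E" and bd: "\<forall>r. two_path V E r \<longrightarrow> length r \<le> Suc d"
    and g: "c_gadget V E (Suc e) L xs" and b: "Suc d \<le> b" "b + Suc d \<le> L"
    and bad: "\<not> c_gadget_vertex V E e (xs ! (b - 1)) (xs ! b) (xs ! Suc b)"
  shows "\<exists>r. is_ray V E r \<and> hd r = xs ! b \<and> length r = Suc (Suc e) \<and>
           xs ! (b - 1) \<notin> set r \<and> xs ! Suc b \<notin> set r"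
    and "\<not> is_fork V E (xs ! b)"
proof -
  have p: "is_path V E xs" "length xs = Suc L"
    and good: "c_gadget_vertex V E (Suc e) (xs ! (b - 1)) (xs ! b) (xs ! Suc b)"
    using g b unfolding c_gadget_iff by auto
  have "E (xs ! b) (xs ! (b - 1))"
    using is_path_edge[OF p(1), of "b - 1"] b p(2) tree_edgeD(4)[OF t] by simp
  moreover have "E (xs ! b) (xs ! Suc b)" using is_path_edge[OF p(1), of b] b p(2) by simp
  ultimately show "\<exists>r. is_ray V E r \<and> hd r = xs ! b \<and> length r = Suc (Suc e) \<and>
           xs ! (b - 1) \<notin> set r \<and> xs ! Suc b \<notin> set r"
    using junction_ray[OF t _ _ good bad] by blast
  show "\<not> is_fork V E (xs ! b)" using path_vertex_not_fork[OF t bd p(1)] b p(2) by simp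
qed

lemma closed_strong_c_gadgetI:
  assumes g: "c_gadget V E d L xs" and k: "0 < k"
    and b: "\<And>t. t < k \<Longrightarrow> 2 * d < b t \<and> b t + 2 * d < L"
    and gaps: "\<And>t. Suc t < k \<Longrightarrow> b t + 2 * d < b (Suc t)"
    and rays: "\<And>t. t < k \<Longrightarrow> \<exists>r. is_ray V E r \<and> hd r = xs ! b t \<and> length r = Suc d \<and>
                  xs ! (b t - 1) \<notin> set r \<and> xs ! Suc (b t) \<notin> set r"
    and ends: "\<not> is_fork V E (xs ! b 0)" "\<not> is_fork V E (xs ! b (k - 1))"
  shows "closed_strong_c_gadget V E d k xs"
proof -
  define I where "I j = (if j = 0 then 0 else if j \<le> k then b (j - 1) else L)" for j
  have "I j < I (Suc j) \<and> 2 * d < I (Suc j) - I j" if j: "j \<le> k" for j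
  proof -
    consider "j = 0" | "0 < j" "j < k" | "j = k" "0 < j" using j by linarith
    then show ?thesis
    proof cases
      case 1 then show ?thesis using b[OF k] k unfolding I_def by auto
    next
      case 2 then show ?thesis using gaps[of "j - 1"] unfolding I_def by auto
    next
      case 3 then show ?thesis using b[of "k - 1"] unfolding I_def by auto
    qed
  qed
  moreover have "I 0 = 0" "I 1 = b 0" "I k = b (k - 1)" "I (Suc k) = L" using k unfolding I_def by auto
  moreover have "\<forall>j\<in>{1..k}. \<exists>r. is_ray V E r \<and> hd r = xs ! I j \<and> length r = Suc d \<and>
                   xs ! (I j - 1) \<notin> set r \<and> xs ! Suc (I j) \<notin> set r"
    using rays unfolding I_def by auto
  ultimately show ?thesis
    unfolding closed_strong_c_gadget_def using g ends by (intro exI[of _ L] conjI exI[of _ I]) auto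
qed

text \<open>The recursion mirrors the induction on the order: a gadget of order e+1 is cut into
  k blocks, each a window of length gadget_length d k e flanked by two margins of length 2d+1.\<close>

fun gadget_length :: "nat \<Rightarrow> nat \<Rightarrow> nat \<Rightarrow> nat" where
  "gadget_length d k 0 = Suc d"
| "gadget_length d k (Suc e) = k * (gadget_length d k e + 2 * (2 * d + 1))"

lemma closed_strong_c_gadget_if_no_window_c_gadget:
  assumes t: "is_tree V E" and bd: "\<forall>r. two_path V E r \<longrightarrow> length r \<le> Suc d"
    and e: "Suc e \<le> d" and k: "0 < k"
    and C: "C = M + 2 * (2 * d + 1)" and g: "c_gadget V E (Suc e) (k * C) xs"
    and windows: "\<And>t. t < k \<Longrightarrow> \<not> c_gadget V E e M (take (Suc M) (drop (t * C + 2 * d + 1) xs))"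
  shows "closed_strong_c_gadget V E (Suc e) k xs"
proof -
  define G where "G = 2 * d + 1"
  have p: "is_path V E xs" "length xs = Suc (k * C)" using g unfolding c_gadget_iff by auto
  have block: "t * C + C \<le> k * C" if "t < k" for t
    using mult_le_mono1[of "Suc t" k C] that by simp
  have "\<exists>i. t * C + G < i \<and> i < t * C + G + M \<and>
      \<not> c_gadget_vertex V E e (xs ! (i - 1)) (xs ! i) (xs ! Suc i)" if "t < k" for t
    using windows[OF that] c_gadget_window_iff[OF p(1), of "t * C + G" M e] block[OF that] p(2)
    unfolding C G_def by (auto simp: add.assoc)
  then obtain b where b: "\<And>t. t < k \<Longrightarrow> t * C + G < b t \<and> b t < t * C + G + M \<and>
      \<not> c_gadget_vertex V E e (xs ! (b t - 1)) (xs ! b t) (xs ! Suc (b t))"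
    by metis
  have margin: "2 * Suc e < G" using e unfolding G_def by simp
  have bt: "G < b t \<and> b t + G < k * C" if "t < k" for t
    using b[OF that] block[OF that] unfolding C G_def by auto
  have inner: "Suc d \<le> b t" "b t + Suc d \<le> k * C" if "t < k" for t
    using bt[OF that] unfolding G_def by auto
  show ?thesis
  proof (rule closed_strong_c_gadgetI[OF g k])
    show "2 * Suc e < b t \<and> b t + 2 * Suc e < k * C" if "t < k" for t
      using bt[OF that] margin by linarith
    show "b t + 2 * Suc e < b (Suc t)" if "Suc t < k" for t
      using b[OF that] b[of t] that margin unfolding C G_def by auto
    show "\<exists>r. is_ray V E r \<and> hd r = xs ! b t \<and> length r = Suc (Suc e) \<and>
        xs ! (b t - 1) \<notin> set r \<and> xs ! Suc (b t) \<notin> set r" if "t < k" for t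
      using c_gadget_junction(1)[OF t bd g inner[OF that]] b[OF that] by blast
    show "\<not> is_fork V E (xs ! b 0)" "\<not> is_fork V E (xs ! b (k - 1))"
      using c_gadget_junction(2)[OF t bd g inner] b k by auto
  qed
qed

lemma closed_strong_c_gadget_in_c_gadget:
  assumes t: "is_tree V E" and bd: "\<forall>r. two_path V E r \<longrightarrow> length r \<le> Suc d" and k: "1 \<le> k"
  shows "e \<le> d \<Longrightarrow> c_gadget V E e (gadget_length d k e) xs \<Longrightarrow>
    \<exists>d'. 1 \<le> d' \<and> d' \<le> e \<and> (\<exists>k' ys. k \<le> k' \<and> closed_strong_c_gadget V E d' k' ys)"
proof (induction e arbitrary: xs)
  case 0
  then show ?case using c_gadget_order_0_length_le[OF t bd] by fastforce
next
  case (Suc e)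
  define M where "M = gadget_length d k e"
  define C where "C = M + 2 * (2 * d + 1)"
  show ?case
  proof (cases "\<exists>t<k. c_gadget V E e M (take (Suc M) (drop (t * C + 2 * d + 1) xs))")
    case True
    then show ?thesis using Suc.IH Suc.prems(1) unfolding M_def by force
  next
    case False
    then have "closed_strong_c_gadget V E (Suc e) k xs"
      using closed_strong_c_gadget_if_no_window_c_gadget[OF t bd Suc.prems(1) _ C_def] Suc.prems(2) k
      unfolding C_def M_def by auto
    then show ?thesis using Suc.prems(1) by auto
  qed
qed

theorem corollary35:
  fixes d k :: nat
  assumes "d \<ge> 1" and "k \<ge> 1"
  shows "\<exists>L > 0. \<forall>(V :: nat set) E.
           is_tree V E \<and>
           (\<exists>xs. two_path V E xs \<and> length xs = Suc d) \<and>
           (\<forall>xs. two_path V E xs \<longrightarrow> length xs \<le> Suc d) \<and>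
           (\<exists>xs. c_gadget V E d L xs)
           \<longrightarrow> (\<exists>d'. 1 \<le> d' \<and> d' \<le> d \<and>
                 (\<exists>k' xs. k' \<ge> k \<and> closed_strong_c_gadget V E d' k' xs))"
proof (rule exI[of _ "gadget_length d k d"], intro conjI allI impI)
  show "0 < gadget_length d k d" using assms by (cases d) auto
  fix V :: "nat set" and E
  assume "is_tree V E \<and>
           (\<exists>xs. two_path V E xs \<and> length xs = Suc d) \<and>
           (\<forall>xs. two_path V E xs \<longrightarrow> length xs \<le> Suc d) \<and>
           (\<exists>xs. c_gadget V E d (gadget_length d k d) xs)"
  then show "\<exists>d'. 1 \<le> d' \<and> d' \<le> d \<and> (\<exists>k' xs. k' \<ge> k \<and> closed_strong_c_gadget V E d' k' xs)"
    using closed_strong_c_gadget_in_c_gadget[of V E d k d] assms(2) by blast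
qed

end
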